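(* Let $(\mathrm{PA}_t)_{t\ge1}$ be the preferential attachment model with $m\ge2$ and $\delta\in(-m,0)$. Fix $\varepsilon>0$ and let $k^-_t=(1-\varepsilon)\frac{\log\log t}{\log m}$ (rounded to an integer). Then $\mathbb{E}[M_{k_t^-}]\to\infty$ as $t\to\infty$, where $M_k=|\mathcal M_k|$ is the number of minimally-$k$-connected vertices in $\mathrm{PA}_t$.
   Context: Preferential attachment model: $\xi_{s,j}\in[s]$ is the vertex to which the $j$-th edge of vertex $s$ is attached. Order $(s,i)\le(t,j)$ iff $s<t$ or ($s=t$, $i\le j$); $(t,0):=(t-1,m)$. $D_{t,k}(v)=\sum_{(s,i)\le(t,k)}(\mathbf 1_{\{\xi_{s,i}=v\}}+\mathbf 1_{\{s=v\}})$, $D_t(v)=D_{t,m}(v)$. $\xi_{1,j}=1$; for $t\ge2$, given the past, $\xi_{t,j}=v$ with probability $(D_{t,j-1}(v)+1+j\delta/m)/c_{t,j}$ if $v=t$ and $(D_{t,j-1}(v)+\delta)/c_{t,j}$ if $v<t$, with $c_{t,j}=[m(t-1)+(j-1)](2+\delta/m)+1+\delta/m$. $\mathrm{PA}_t$ has an edge between $s$ and $\xi_{s,i}$ for each $(s,i)\le(t,m)$. $U_{\le k}(v)$ is the set/subgraph of vertices within distance $k$ of $v$. A vertex $v\in[t]\setminus[t/2]$ is minimally-$k$-connected if $D_t(v)=m$, all other vertices $i\in U_{\le k}(v)$ lie in $[t/2]\setminus[t/4]$ and have $D_t(i)=m+1$, and there are no self-loops, multiple edges or cycles in $U_{\le k}(v)$.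 *)

theory Defs
  imports "HOL-Probability.Probability"
begin

text \<open>The edge history of the model is a list xs of natural numbers:
  the entry xs ! i is the target \<xi>(s,j) of the edge (s,j) with
  i = m*(s-1) + (j-1), i.e. s = i div m + 1 and j = i mod m + 1.
  PA_t corresponds to the history of length m*t.\<close>

definition pa_src :: "nat \<Rightarrow> nat \<Rightarrow> nat" where
  "pa_src m i = i div m + 1"

definition pa_deg :: "nat \<Rightarrow> nat list \<Rightarrow> nat \<Rightarrow> nat" where
  "pa_deg m xs v = card {i. i < length xs \<and> xs ! i = v} + card {i. i < length xs \<and> pa_src m i = v}"

definition pa_c :: "nat \<Rightarrow> real \<Rightarrow> nat \<Rightarrow> nat \<Rightarrow> real" where
  "pa_c m \<delta> t j = real (m * (t - 1) + (j - 1)) * (2 + \<delta> / real m) + 1 + \<delta> / real m"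

definition pa_next_weight :: "nat \<Rightarrow> real \<Rightarrow> nat list \<Rightarrow> nat \<Rightarrow> real" where
  "pa_next_weight m \<delta> xs v =
     (let t = length xs div m + 1; j = length xs mod m + 1 in
      if t = 1 then (if v = 1 then 1 else 0)
      else if v = t then (real (pa_deg m xs v) + 1 + real j * \<delta> / real m) / pa_c m \<delta> t j
      else if 1 \<le> v \<and> v < t then (real (pa_deg m xs v) + \<delta>) / pa_c m \<delta> t j
      else 0)"

definition pa_next :: "nat \<Rightarrow> real \<Rightarrow> nat list \<Rightarrow> nat pmf" where
  "pa_next m \<delta> xs = embed_pmf (pa_next_weight m \<delta> xs)"

fun pa_hist :: "nat \<Rightarrow> real \<Rightarrow> nat \<Rightarrow> nat list pmf" where
  "pa_hist m \<delta> 0 = return_pmf []"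
| "pa_hist m \<delta> (Suc n) =
     bind_pmf (pa_hist m \<delta> n) (\<lambda>xs. map_pmf (\<lambda>v. xs @ [v]) (pa_next m \<delta> xs))"

definition PA :: "nat \<Rightarrow> real \<Rightarrow> nat \<Rightarrow> nat list pmf" where
  "PA m \<delta> t = pa_hist m \<delta> (m * t)"

definition pa_adj :: "nat \<Rightarrow> nat list \<Rightarrow> nat \<Rightarrow> nat \<Rightarrow> bool" where
  "pa_adj m xs u w \<longleftrightarrow> (\<exists>i < length xs. {pa_src m i, xs ! i} = {u, w})"

definition pa_ball :: "nat \<Rightarrow> nat list \<Rightarrow> nat \<Rightarrow> nat \<Rightarrow> nat set" where
  "pa_ball m xs k v = {w. \<exists>l \<le> k. (v, w) \<in> ({(u, u'). pa_adj m xs u u'} ^^ l)}"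

definition has_self_loop_in :: "nat \<Rightarrow> nat list \<Rightarrow> nat set \<Rightarrow> bool" where
  "has_self_loop_in m xs U \<longleftrightarrow> (\<exists>i < length xs. pa_src m i = xs ! i \<and> xs ! i \<in> U)"

definition has_multi_edge_in :: "nat \<Rightarrow> nat list \<Rightarrow> nat set \<Rightarrow> bool" where
  "has_multi_edge_in m xs U \<longleftrightarrow>
     (\<exists>i < length xs. \<exists>i' < length xs. i \<noteq> i' \<and> pa_src m i \<in> U \<and> xs ! i \<in> U \<and>
        {pa_src m i, xs ! i} = {pa_src m i', xs ! i'})"

definition has_cycle_in :: "nat \<Rightarrow> nat list \<Rightarrow> nat set \<Rightarrow> bool" where
  "has_cycle_in m xs U \<longleftrightarrow>
     (\<exists>cs. length cs \<ge> 3 \<and> distinct cs \<and> set cs \<subseteq> U \<and>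
        (\<forall>i < length cs - 1. pa_adj m xs (cs ! i) (cs ! Suc i)) \<and>
        pa_adj m xs (last cs) (hd cs))"

text \<open>Minimally-k-connected vertex of PA_t (xs = history of length m*t).
  [x] = {1..floor x}, so v \<in> [t]\[t/2] means t div 2 < v \<le> t, and
  i \<in> [t/2]\[t/4] means t div 4 < i \<le> t div 2.\<close>
definition min_k_connected :: "nat \<Rightarrow> nat \<Rightarrow> nat list \<Rightarrow> nat \<Rightarrow> nat \<Rightarrow> bool" where
  "min_k_connected m t xs k v \<longleftrightarrow>
     t div 2 < v \<and> v \<le> t \<and> pa_deg m xs v = m \<and>
     (\<forall>i \<in> pa_ball m xs k v. i \<noteq> v \<longrightarrow> t div 4 < i \<and> i \<le> t div 2 \<and> pa_deg m xs i = m + 1) \<and>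
     \<not> has_self_loop_in m xs (pa_ball m xs k v) \<and>
     \<not> has_multi_edge_in m xs (pa_ball m xs k v) \<and>
     \<not> has_cycle_in m xs (pa_ball m xs k v)"

definition M_count :: "nat \<Rightarrow> nat \<Rightarrow> nat list \<Rightarrow> nat \<Rightarrow> nat" where
  "M_count m t xs k = card {v. min_k_connected m t xs k v}"

end

theory Submission
  imports Defs "HOL-Real_Asymp.Real_Asymp"
begin

text \<open>
  Fix v in (t/2, t] and number the nodes of the complete m-ary tree of depth k breadth-first as
  0, ..., N-1, of which the first I are inner nodes. A labelling gives the root the label v and
  node q \<ge> 1 a vertex of an interval J_q \<subseteq> (t/4, t/2] of length L \<approx> t/(4N), the intervals
  decreasing in q. Its tree event requires that the j-th edge of the label of every inner node
  attaches to the label of its j-th child and that every other edge avoids all labels; on this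
  event v is minimally-k-connected, its k-ball being the labelled tree. Conditioning edge by edge,
  each of the mI forced edges succeeds with probability at least (m+\<delta>)/(2mt+1), since its target
  is an earlier vertex of degree at least m, and every other edge avoids the N labels, which have
  degree at most m+1, with probability at least 1 - O(N/t). The events of different labellings
  are disjoint and there are L^(mI) labellings, so
  E M_k \<ge> (t/2) (L (m+\<delta>)/(2mt+1))^(mI) (1 - O(N/t))^(mt) \<ge> (t/2) exp(-O(N log N)).
  For k = (1-\<epsilon>) log log t / log m the tree has N \<le> m^2 (log t)^\<eta> nodes with \<eta> < 1, so
  the bound tends to infinity.
\<close>

lemma pa_src_eq_iff:
  assumes "0 < m"
  shows "pa_src m i = v \<longleftrightarrow> 1 \<le> v \<and> m * (v - 1) \<le> i \<and> i < m * v"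
proof
  assume "pa_src m i = v"
  then have v: "v = i div m + 1" unfolding pa_src_def by simp
  have "i mod m < m" using assms by simp
  moreover have "m * (i div m) + i mod m = i" by simp
  ultimately have "i < m * (i div m) + m" "m * (i div m) \<le> i" by linarith+
  then show "1 \<le> v \<and> m * (v - 1) \<le> i \<and> i < m * v" using v by (simp add: algebra_simps)
next
  assume h: "1 \<le> v \<and> m * (v - 1) \<le> i \<and> i < m * v"
  then obtain u where u: "v = Suc u" by (cases v) auto
  have "i div m = u" using h assms unfolding u
    by (intro div_nat_eqI) (auto simp: algebra_simps mult.commute)
  then show "pa_src m i = v" using u unfolding pa_src_def by simp
qed

lemma pa_src_fibre_eq:
  assumes "0 < m" "1 \<le> v"
  shows "{i. i < n \<and> pa_src m i = v} = {m * (v - 1)..<min n (m * v)}"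
  using pa_src_eq_iff[OF assms(1)] assms by auto

lemma card_pa_src_fibre_le:
  assumes "0 < m"
  shows "card {i. i < n \<and> pa_src m i = v} \<le> m"
proof (cases "1 \<le> v")
  case True
  have "m * v - m * (v - 1) = m" using True by (simp add: diff_mult_distrib2)
  moreover have "min n (m * v) - m * (v - 1) \<le> m * v - m * (v - 1)" by (simp add: diff_le_mono)
  ultimately show ?thesis using pa_src_fibre_eq[OF assms True, of n] by simp
next
  case False
  then have empty: "{i. i < n \<and> pa_src m i = v} = {}" unfolding pa_src_def by auto
  show ?thesis unfolding empty by simp
qed

lemma card_pa_src_fibre_complete:
  assumes "0 < m" "1 \<le> v" "m * v \<le> n"
  shows "card {i. i < n \<and> pa_src m i = v} = m"
proof -
  have "m * v - m * (v - 1) = m" using assms by (simp add: diff_mult_distrib2)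
  then show ?thesis using pa_src_fibre_eq[OF assms(1,2)] assms by (simp add: min_def)
qed

lemma card_pa_src_fibre_current:
  assumes "0 < m"
  shows "card {i. i < n \<and> pa_src m i = n div m + 1} = n mod m"
proof -
  have "n mod m < m" using assms by simp
  moreover have "m * (n div m) + n mod m = n" by simp
  ultimately have "n < m * (n div m) + m" by linarith
  then have "n < m * (n div m + 1)" by (simp add: algebra_simps)
  then have "min n (m * (n div m + 1)) = n" by simp
  then show ?thesis using pa_src_fibre_eq[OF assms, of "n div m + 1" n]
    by (simp add: minus_mult_div_eq_mod)
qed

lemma pa_src_decomp: "m * (pa_src m i - 1) + i mod m = i"
  unfolding pa_src_def by simp

lemma pa_src_le: "i < n \<Longrightarrow> pa_src m i \<le> n div m + 1"
  unfolding pa_src_def by (simp add: div_le_mono)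

lemma pa_deg_complete_ge:
  assumes "0 < m" "1 \<le> v" "m * v \<le> length xs"
  shows "m \<le> pa_deg m xs v"
  using card_pa_src_fibre_complete[OF assms] unfolding pa_deg_def by simp

lemma pa_deg_current_ge:
  assumes "0 < m"
  shows "length xs mod m \<le> pa_deg m xs (length xs div m + 1)"
  using card_pa_src_fibre_current[OF assms, of "length xs"] unfolding pa_deg_def by simp

lemma sum_card_fibres:
  assumes "finite V" "\<And>i. i < n \<Longrightarrow> f i \<in> V"
  shows "(\<Sum>v\<in>V. card {i. i < n \<and> f i = v}) = n"
proof -
  have "card (\<Union>v\<in>V. {i. i < n \<and> f i = v}) = (\<Sum>v\<in>V. card {i. i < n \<and> f i = v})"
    by (rule card_UN_disjoint) (use assms in auto)
  moreover have "{..<n} = (\<Union>v\<in>V. {i. i < n \<and> f i = v})" using assms by auto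
  ultimately show ?thesis by (metis card_lessThan)
qed

definition pa_valid_hist :: "nat \<Rightarrow> nat \<Rightarrow> nat list \<Rightarrow> bool" where
  "pa_valid_hist m n xs \<longleftrightarrow> length xs = n \<and> (\<forall>i<n. 1 \<le> xs ! i \<and> xs ! i \<le> pa_src m i)"

lemma sum_pa_deg:
  assumes "pa_valid_hist m n xs" "0 < m"
  shows "(\<Sum>v\<in>{1..n div m + 1}. pa_deg m xs v) = 2 * n"
proof -
  have len: "length xs = n" using assms unfolding pa_valid_hist_def by simp
  have targets: "(\<Sum>v\<in>{1..n div m + 1}. card {i. i < n \<and> xs ! i = v}) = n"
    using assms pa_src_le[of _ n m] unfolding pa_valid_hist_def
    by (intro sum_card_fibres) (auto intro: order_trans)
  have sources: "(\<Sum>v\<in>{1..n div m + 1}. card {i. i < n \<and> pa_src m i = v}) = n"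
    using pa_src_le[of _ n m] by (intro sum_card_fibres) (auto simp: pa_src_def)
  show ?thesis unfolding pa_deg_def len sum.distrib targets sources by simp
qed

section \<open>The law of the edge history\<close>

locale pa_model =
  fixes m :: nat and \<delta> :: real
  assumes m_ge_2: "2 \<le> m" and delta_gt: "- real m < \<delta>" and delta_neg: "\<delta> < 0"
begin

lemma m_pos: "0 < m"
  using m_ge_2 by simp

lemma delta_div_m_bounds: "0 < 1 + \<delta> / real m" "\<delta> / real m < 0" "1 < 2 + \<delta> / real m"
proof -
  have "- 1 < \<delta> / real m" using delta_gt m_pos by (simp add: field_simps)
  then show "0 < 1 + \<delta> / real m" "1 < 2 + \<delta> / real m" by linarith+
  show "\<delta> / real m < 0" using delta_neg m_pos by (simp add: divide_neg_pos)
qed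

lemma pa_c_eq:
  "pa_c m \<delta> (n div m + 1) (n mod m + 1) = real n * (2 + \<delta> / real m) + 1 + \<delta> / real m"
  unfolding pa_c_def by simp

lemma pa_c_pos: "0 < pa_c m \<delta> (n div m + 1) (n mod m + 1)"
proof -
  have "0 \<le> real n * (2 + \<delta> / real m)" using delta_div_m_bounds by simp
  then show ?thesis unfolding pa_c_eq using delta_div_m_bounds by linarith
qed

lemma pa_c_eq_total_weight:
  "pa_c m \<delta> (n div m + 1) (n mod m + 1)
    = 2 * real n + real (n div m) * \<delta> + 1 + real (n mod m + 1) * \<delta> / real m"
proof -
  have "real n = real m * real (n div m) + real (n mod m)"
    using div_mult_mod_eq[of n m] by (metis mult.commute of_nat_add of_nat_mult)
  then show ?thesis unfolding pa_c_eq using m_pos by (simp add: field_simps)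
qed

lemma pa_c_le:
  assumes "n < m * t"
  shows "pa_c m \<delta> (n div m + 1) (n mod m + 1) \<le> 2 * real m * real t + 1"
proof -
  have "real n * (2 + \<delta> / real m) \<le> real n * 2" using delta_div_m_bounds by (simp add: mult_left_mono)
  moreover have "real n \<le> real m * real t" using assms by (metis less_imp_le of_nat_le_iff of_nat_mult)
  ultimately show ?thesis unfolding pa_c_eq using delta_div_m_bounds by linarith
qed

lemma pa_c_ge:
  assumes "m * s \<le> n"
  shows "real m * real s \<le> pa_c m \<delta> (n div m + 1) (n mod m + 1)"
proof -
  have "real m * real s \<le> real n" using assms by (metis of_nat_le_iff of_nat_mult)
  moreover have "real n * 1 \<le> real n * (2 + \<delta> / real m)"
    by (rule mult_left_mono) (use delta_div_m_bounds in auto)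
  ultimately show ?thesis unfolding pa_c_eq using delta_div_m_bounds by linarith
qed

lemma pa_next_weight_eq_0:
  "v < 1 \<or> length xs div m + 1 < v \<Longrightarrow> pa_next_weight m \<delta> xs v = 0"
  unfolding pa_next_weight_def by (auto simp: Let_def)

lemma pa_next_weight_nonneg: "0 \<le> pa_next_weight m \<delta> xs v"
proof -
  define n where "n = length xs"
  define t where "t = n div m + 1"
  define j where "j = n mod m + 1"
  have c: "0 < pa_c m \<delta> t j" using pa_c_pos unfolding t_def j_def .
  note weight = pa_next_weight_def[of m \<delta> xs v, unfolded n_def[symmetric] t_def[symmetric]
      j_def[symmetric] Let_def]
  consider "t = 1" | "t \<noteq> 1" "v = t" | "t \<noteq> 1" "v \<noteq> t" "1 \<le> v" "v < t"
    | "t \<noteq> 1" "v \<noteq> t" "\<not> (1 \<le> v \<and> v < t)" by blast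
  then show ?thesis
  proof cases
    case 2
    have "real j - 1 \<le> real (pa_deg m xs v)"
      using pa_deg_current_ge[OF m_pos, of xs] 2 unfolding n_def t_def j_def by simp
    moreover have "0 < real j * (1 + \<delta> / real m)" using delta_div_m_bounds unfolding j_def by simp
    ultimately have "0 \<le> real (pa_deg m xs v) + 1 + real j * \<delta> / real m"
      by (simp add: algebra_simps)
    then show ?thesis using c 2 unfolding weight by simp
  next
    case 3
    have "m * v \<le> m * (n div m)" using 3 unfolding t_def by simp
    also have "\<dots> \<le> n" by simp
    finally have "m \<le> pa_deg m xs v" using pa_deg_complete_ge[OF m_pos] 3 unfolding n_def by simp
    then have "0 \<le> real (pa_deg m xs v) + \<delta>" using delta_gt by linarith
    then show ?thesis using c 3 unfolding weight by simp
  qed (use weight in auto)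
qed

lemma sum_pa_next_weight:
  assumes "pa_valid_hist m n xs"
  shows "(\<Sum>v\<in>{1..n div m + 1}. pa_next_weight m \<delta> xs v) = 1"
proof -
  have len: "length xs = n" using assms unfolding pa_valid_hist_def by simp
  define t where "t = n div m + 1"
  define j where "j = n mod m + 1"
  define c where "c = pa_c m \<delta> t j"
  have c_pos: "0 < c" using pa_c_pos unfolding c_def t_def j_def .
  note weight = pa_next_weight_def[of m \<delta> xs, unfolded len t_def[symmetric] j_def[symmetric]
      c_def[symmetric] Let_def]
  show ?thesis
  proof (cases "t = 1")
    case True
    then show ?thesis unfolding t_def[symmetric] weight by simp
  next
    case False
    then have t2: "2 \<le> t" unfolding t_def by simp
    have split: "{1..t} = insert t {1..<t}" using t2 by auto
    have old: "pa_next_weight m \<delta> xs v = (real (pa_deg m xs v) + \<delta>) / c" if "v \<in> {1..<t}" for v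
      using that False unfolding weight by auto
    have new: "pa_next_weight m \<delta> xs t = (real (pa_deg m xs t) + 1 + real j * \<delta> / real m) / c"
      using False unfolding weight by auto
    have "(\<Sum>v\<in>{1..t}. real (pa_deg m xs v)) = 2 * real n"
      using sum_pa_deg[OF assms m_pos] unfolding t_def[symmetric]
      by (metis of_nat_mult of_nat_numeral of_nat_sum)
    then have degs: "(\<Sum>v\<in>{1..<t}. real (pa_deg m xs v)) + real (pa_deg m xs t) = 2 * real n"
      unfolding split by simp
    have "(\<Sum>v\<in>{1..t}. pa_next_weight m \<delta> xs v) =
        (\<Sum>v\<in>{1..<t}. (real (pa_deg m xs v) + \<delta>) / c)
          + (real (pa_deg m xs t) + 1 + real j * \<delta> / real m) / c"
      unfolding split using old new by simp
    also have "\<dots> = ((\<Sum>v\<in>{1..<t}. real (pa_deg m xs v)) + (real t - 1) * \<delta>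
          + (real (pa_deg m xs t) + 1 + real j * \<delta> / real m)) / c"
      using t2 by (simp add: sum_divide_distrib[symmetric] sum.distrib add_divide_distrib of_nat_diff)
    also have "\<dots> = (2 * real n + (real t - 1) * \<delta> + 1 + real j * \<delta> / real m) / c"
      using degs by (simp add: algebra_simps)
    also have "2 * real n + (real t - 1) * \<delta> + 1 + real j * \<delta> / real m = c"
      unfolding c_def t_def j_def pa_c_eq_total_weight by simp
    finally show ?thesis using c_pos unfolding t_def by simp
  qed
qed

lemma nn_integral_pa_next_weight:
  assumes "pa_valid_hist m n xs"
  shows "(\<integral>\<^sup>+ v. ennreal (pa_next_weight m \<delta> xs v) \<partial>count_space UNIV) = 1"
proof -
  have len: "length xs = n" using assms unfolding pa_valid_hist_def by simp
  have "(\<integral>\<^sup>+ v. ennreal (pa_next_weight m \<delta> xs v) \<partial>count_space UNIV) =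
      (\<Sum>v\<in>{1..n div m + 1}. ennreal (pa_next_weight m \<delta> xs v))"
    by (rule nn_integral_count_space') (use pa_next_weight_eq_0 len in auto)
  also have "\<dots> = ennreal (\<Sum>v\<in>{1..n div m + 1}. pa_next_weight m \<delta> xs v)"
    by (rule sum_ennreal) (use pa_next_weight_nonneg in auto)
  finally show ?thesis using sum_pa_next_weight[OF assms] by simp
qed

lemma pmf_pa_next:
  assumes "pa_valid_hist m n xs"
  shows "pmf (pa_next m \<delta> xs) v = pa_next_weight m \<delta> xs v"
  unfolding pa_next_def using pa_next_weight_nonneg nn_integral_pa_next_weight[OF assms]
  by (rule pmf_embed_pmf)

lemma set_pmf_pa_next:
  assumes "pa_valid_hist m n xs"
  shows "set_pmf (pa_next m \<delta> xs) \<subseteq> {1..n div m + 1}"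
proof -
  have "set_pmf (pa_next m \<delta> xs) = {v. pa_next_weight m \<delta> xs v \<noteq> 0}"
    unfolding pa_next_def using pa_next_weight_nonneg nn_integral_pa_next_weight[OF assms]
    by (rule set_embed_pmf)
  moreover have "v \<in> {1..n div m + 1}" if "pa_next_weight m \<delta> xs v \<noteq> 0" for v
    using that pa_next_weight_eq_0[of v xs] assms unfolding pa_valid_hist_def by fastforce
  ultimately show ?thesis by blast
qed

lemma pa_hist_valid: "xs \<in> set_pmf (pa_hist m \<delta> n) \<Longrightarrow> pa_valid_hist m n xs"
proof (induction n arbitrary: xs)
  case 0
  then show ?case by (simp add: pa_valid_hist_def)
next
  case (Suc n)
  from Suc.prems obtain ys v where ys: "ys \<in> set_pmf (pa_hist m \<delta> n)"
    and v: "v \<in> set_pmf (pa_next m \<delta> ys)" and xs: "xs = ys @ [v]" by auto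
  have valid: "pa_valid_hist m n ys" using Suc.IH ys .
  have "v \<in> {1..n div m + 1}" using set_pmf_pa_next[OF valid] v by auto
  then have "1 \<le> v \<and> v \<le> pa_src m n" unfolding pa_src_def by simp
  then show ?case using valid unfolding xs pa_valid_hist_def by (auto simp: nth_append less_Suc_eq)
qed

lemma emeasure_pa_hist_prefix_ge:
  fixes A :: "nat \<Rightarrow> nat set" and b :: "nat \<Rightarrow> real"
  assumes b_nonneg: "\<And>i. 0 \<le> b i"
    and step: "\<And>i xs. i < n \<Longrightarrow> xs \<in> set_pmf (pa_hist m \<delta> i) \<Longrightarrow> \<forall>i'<i. xs ! i' \<in> A i' \<Longrightarrow>
      b i \<le> measure (pa_next m \<delta> xs) (A i)"
  shows "ennreal (\<Prod>i<n. b i) \<le> emeasure (pa_hist m \<delta> n) {xs. \<forall>i<n. xs ! i \<in> A i}"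
  using step
proof (induction n)
  case 0
  then show ?case by (simp add: measure_pmf.emeasure_eq_measure)
next
  case (Suc n)
  define G where "G = {xs. \<forall>i<n. xs ! i \<in> A i}"
  define G' where "G' = {xs. \<forall>i<Suc n. xs ! i \<in> A i}"
  have IH: "ennreal (\<Prod>i<n. b i) \<le> emeasure (pa_hist m \<delta> n) G"
    unfolding G_def using Suc.prems by (intro Suc.IH) auto
  have extend: "indicator G ys * ennreal (b n)
      \<le> emeasure (measure_pmf (map_pmf (\<lambda>v. ys @ [v]) (pa_next m \<delta> ys))) G'"
    if ys: "ys \<in> set_pmf (pa_hist m \<delta> n)" for ys
  proof (cases "ys \<in> G")
    case True
    have "length ys = n" using pa_hist_valid[OF ys] unfolding pa_valid_hist_def by simp
    then have "(\<lambda>v. ys @ [v]) -` G' = A n"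
      using True unfolding G_def G'_def by (auto simp: nth_append less_Suc_eq)
    moreover have "b n \<le> measure (pa_next m \<delta> ys) (A n)"
      using Suc.prems[of n ys] ys True unfolding G_def by simp
    ultimately show ?thesis
      using True by (simp add: emeasure_map_pmf measure_pmf.emeasure_eq_measure)
  qed simp
  have "ennreal (\<Prod>i<Suc n. b i) = ennreal (b n) * ennreal (\<Prod>i<n. b i)"
    using b_nonneg by (simp add: ennreal_mult' prod_nonneg mult.commute)
  also have "\<dots> \<le> ennreal (b n) * emeasure (pa_hist m \<delta> n) G"
    using IH by (rule mult_left_mono) simp
  also have "\<dots> = (\<integral>\<^sup>+ ys. indicator G ys * ennreal (b n) \<partial>measure_pmf (pa_hist m \<delta> n))"
    by (subst mult.commute) (simp add: nn_integral_cmult_indicator)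
  also have "\<dots> \<le> (\<integral>\<^sup>+ ys. emeasure (measure_pmf (map_pmf (\<lambda>v. ys @ [v]) (pa_next m \<delta> ys))) G'
      \<partial>measure_pmf (pa_hist m \<delta> n))"
    by (rule nn_integral_mono_AE) (use extend in \<open>auto intro!: AE_pmfI\<close>)
  also have "\<dots> = emeasure (pa_hist m \<delta> (Suc n)) G'"
    by (simp only: pa_hist.simps emeasure_bind_pmf)
  finally show ?case unfolding G'_def .
qed

lemma measure_pa_hist_prefix_ge:
  fixes A :: "nat \<Rightarrow> nat set" and b :: "nat \<Rightarrow> real"
  assumes "\<And>i. 0 \<le> b i"
    and "\<And>i xs. i < n \<Longrightarrow> xs \<in> set_pmf (pa_hist m \<delta> i) \<Longrightarrow> \<forall>i'<i. xs ! i' \<in> A i' \<Longrightarrow>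
      b i \<le> measure (pa_next m \<delta> xs) (A i)"
  shows "(\<Prod>i<n. b i) \<le> measure (pa_hist m \<delta> n) {xs. \<forall>i<n. xs ! i \<in> A i}"
  using emeasure_pa_hist_prefix_ge[OF assms] assms(1)
  by (simp add: measure_pmf.emeasure_eq_measure prod_nonneg)

end

section \<open>Complete m-ary trees in breadth-first numbering\<close>

text \<open>Nodes are numbered in breadth-first order: the children of node q are m q + 1 + j for
  j < m, so the parent of c > 0 is (c - 1) div m, and the nodes of depth below d are exactly
  0, ..., tree_size m d - 1.\<close>

fun tree_size :: "nat \<Rightarrow> nat \<Rightarrow> nat" where
  "tree_size m 0 = 0"
| "tree_size m (Suc d) = m * tree_size m d + 1"

function tree_depth :: "nat \<Rightarrow> nat \<Rightarrow> nat" where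
  "tree_depth m q = (if q = 0 \<or> m = 0 then 0 else Suc (tree_depth m ((q - 1) div m)))"
  by auto
termination
  by (relation "Wellfounded.measure snd") (auto intro: le_less_trans[OF div_le_dividend])

declare tree_depth.simps[simp del]

lemma tree_depth_parent: "0 < m \<Longrightarrow> 0 < q \<Longrightarrow> tree_depth m q = Suc (tree_depth m ((q - 1) div m))"
  by (subst tree_depth.simps) simp

lemma tree_depth_child: "0 < m \<Longrightarrow> j < m \<Longrightarrow> tree_depth m (m * q + 1 + j) = Suc (tree_depth m q)"
  by (simp add: tree_depth_parent)

lemma tree_size_mono: "0 < m \<Longrightarrow> d \<le> d' \<Longrightarrow> tree_size m d \<le> tree_size m d'"
proof (induction d')
  case (Suc d')
  then show ?case
    using le_Suc_eq[of d d'] order_trans[of "tree_size m d" "tree_size m d'" "m * tree_size m d'"]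
    by auto
qed simp

lemma tree_size_depth_bounds:
  assumes "0 < m"
  shows "tree_size m (tree_depth m q) \<le> q \<and> q < tree_size m (Suc (tree_depth m q))"
proof (induction q rule: less_induct)
  case (less q)
  show ?case
  proof (cases "q = 0")
    case True
    then show ?thesis by (simp add: tree_depth.simps)
  next
    case False
    define p where "p = (q - 1) div m"
    have "p < q" unfolding p_def using False by (simp add: le_less_trans[OF div_le_dividend])
    then have IH: "tree_size m (tree_depth m p) \<le> p" "p < tree_size m (Suc (tree_depth m p))"
      using less.IH by auto
    have depth: "tree_depth m q = Suc (tree_depth m p)"
      using tree_depth_parent[OF assms] False unfolding p_def by simp
    have q: "m * p + (q - 1) mod m = q - 1" "(q - 1) mod m < m"
      using assms unfolding p_def by simp_all
    have "m * tree_size m (tree_depth m p) \<le> m * p" using IH(1) by simp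
    then have "m * tree_size m (tree_depth m p) + 1 \<le> q" using q False by linarith
    then have lower: "tree_size m (tree_depth m q) \<le> q" using depth by simp
    define S where "S = tree_size m (Suc (tree_depth m p))"
    have "m * (p + 1) \<le> m * S" using IH(2) unfolding S_def by (intro mult_le_mono2) simp
    then have "m * p + m \<le> m * S" by (simp add: algebra_simps)
    then have "q < m * S + 1" using q False by linarith
    then have upper: "q < tree_size m (Suc (tree_depth m q))" using depth unfolding S_def by simp
    show ?thesis using lower upper by simp
  qed
qed

lemma tree_size_le_power: "2 \<le> m \<Longrightarrow> tree_size m d + 1 \<le> m ^ d"
proof (induction d)
  case (Suc d)
  then have "m * (tree_size m d + 1) \<le> m * m ^ d" by (intro mult_le_mono2)
  moreover have "m * tree_size m d + 2 \<le> m * (tree_size m d + 1)"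
    using Suc.prems by (simp add: algebra_simps)
  ultimately show ?case by simp
qed simp

lemma cycle_two_neighbours:
  assumes sym: "\<And>x y. R x y \<Longrightarrow> R y x"
    and len: "3 \<le> length cs"
    and path: "\<forall>i < length cs - 1. R (cs ! i) (cs ! Suc i)"
    and close: "R (last cs) (hd cs)"
    and p: "p < length cs"
  obtains a b where "a < length cs" "b < length cs" "a \<noteq> b" "a \<noteq> p" "b \<noteq> p"
    "R (cs ! p) (cs ! a)" "R (cs ! p) (cs ! b)"
proof -
  define n where "n = length cs"
  have step: "R (cs ! i) (cs ! Suc i)" if "Suc i < n" for i
    using path that unfolding n_def by auto
  have "cs \<noteq> []" using len by auto
  then have wrap: "R (cs ! (n - 1)) (cs ! 0)"
    using close by (simp add: last_conv_nth hd_conv_nth n_def)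
  consider "p = 0" | "p = n - 1" "p \<noteq> 0" | "0 < p" "p < n - 1" using p n_def by linarith
  then show ?thesis
  proof cases
    case 1
    show ?thesis
    proof (rule that[of "n - 1" 1])
      show "R (cs ! p) (cs ! (n - 1))" using sym[OF wrap] 1 by simp
      show "R (cs ! p) (cs ! 1)" using step[of 0] 1 len unfolding n_def by simp
    qed (use 1 len in \<open>auto simp: n_def\<close>)
  next
    case 2
    have "Suc (n - 2) = p" "Suc (n - 2) < n" using 2 len unfolding n_def by arith+
    then have "R (cs ! (n - 2)) (cs ! p)" using step[of "n - 2"] by simp
    show ?thesis
    proof (rule that[of "n - 2" 0])
      show "R (cs ! p) (cs ! (n - 2))" using sym[OF \<open>R (cs ! (n - 2)) (cs ! p)\<close>] .
      show "R (cs ! p) (cs ! 0)" using wrap 2 by simp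
    qed (use 2 len in \<open>auto simp: n_def\<close>)
  next
    case 3
    have "Suc (p - 1) = p" using 3 by simp
    then have "R (cs ! (p - 1)) (cs ! p)" using step[of "p - 1"] p n_def by simp
    show ?thesis
    proof (rule that[of "p - 1" "p + 1"])
      show "R (cs ! p) (cs ! (p - 1))" using sym[OF \<open>R (cs ! (p - 1)) (cs ! p)\<close>] .
      show "R (cs ! p) (cs ! (p + 1))" using step[of p] 3 by simp
    qed (use 3 p in \<open>auto simp: n_def\<close>)
  qed
qed

lemma pa_adj_commute: "pa_adj m xs u w \<longleftrightarrow> pa_adj m xs w u"
  unfolding pa_adj_def by (simp add: insert_commute)

section \<open>The tree event of a labelling\<close>

context pa_model
begin

text \<open>forced_lb t bounds below the probability that an edge of PA_t attaches to a given earlier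
  vertex of degree at least m; hit_ub t k is a union bound for the probability that an edge
  attaches to one of the N labels, which lie in (t/4, t/2] and have degree at most m + 1.\<close>

definition forced_lb :: "nat \<Rightarrow> real" where
  "forced_lb t = (real m + \<delta>) / (2 * real m * real t + 1)"

definition hit_ub :: "nat \<Rightarrow> nat \<Rightarrow> real" where
  "hit_ub t k = real (tree_size m (Suc k)) * (real m + 2) / (real m * real (t div 4))"

lemma forced_lb_nonneg: "0 \<le> forced_lb t"
  unfolding forced_lb_def using delta_gt by simp

lemma forced_lb_le_1:
  assumes "0 < t"
  shows "forced_lb t \<le> 1"
proof -
  have "real m * 1 \<le> real m * (2 * real t)" using assms by (intro mult_left_mono) auto
  then show ?thesis unfolding forced_lb_def using delta_neg by (simp add: pos_divide_le_eq)
qed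

lemma hit_ub_nonneg: "0 \<le> hit_ub t k"
  unfolding hit_ub_def by simp

end

locale labelled_tree = pa_model +
  fixes t k v :: nat and lab :: "nat \<Rightarrow> nat"
  assumes root_label: "lab 0 = v" and root_gt: "t div 2 < v" and root_le: "v \<le> t"
    and label_range: "\<And>q. 0 < q \<Longrightarrow> q < tree_size m (Suc k) \<Longrightarrow> t div 4 < lab q \<and> lab q \<le> t div 2"
    and label_decreasing: "\<And>q q'. q < q' \<Longrightarrow> q' < tree_size m (Suc k) \<Longrightarrow> lab q' < lab q"
begin

abbreviation "n_inner \<equiv> tree_size m k"
abbreviation "n_nodes \<equiv> tree_size m (Suc k)"
abbreviation "tree_labels \<equiv> lab ` {0..<n_nodes}"

definition edge_ok :: "nat \<Rightarrow> nat \<Rightarrow> bool" where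
  "edge_ok i w \<longleftrightarrow> (\<forall>q<n_inner. lab q = pa_src m i \<longrightarrow> w = lab (m * q + 1 + i mod m)) \<and>
      ((\<forall>q<n_inner. lab q \<noteq> pa_src m i) \<longrightarrow> w \<notin> tree_labels)"

definition tree_event :: "nat list set" where
  "tree_event = {xs. \<forall>i<m * t. xs ! i \<in> {w. edge_ok i w}}"

text \<open>The index of the edge of the parent's label that has to attach to node c > 0.\<close>
definition tree_edge :: "nat \<Rightarrow> nat" where
  "tree_edge c = m * (lab ((c - 1) div m) - 1) + (c - 1) mod m"

lemma n_inner_lt_n_nodes: "n_inner < n_nodes"
proof -
  have "n_inner \<le> m * n_inner" using m_pos by simp
  then show ?thesis by (simp only: tree_size.simps)
qed

lemma child_lt_n_nodes: "q < n_inner \<Longrightarrow> j < m \<Longrightarrow> m * q + 1 + j < n_nodes"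
proof -
  assume "q < n_inner" "j < m"
  then have "m * q + m \<le> m * n_inner" by (metis Suc_leI add.commute mult_Suc_right mult_le_mono2)
  then show ?thesis using \<open>j < m\<close> by simp
qed

lemma parent_less: "0 < c \<Longrightarrow> (c - 1) div m < c"
  by (simp add: le_less_trans[OF div_le_dividend])

lemma parent_lt_n_inner:
  assumes "0 < c" "c < n_nodes"
  shows "(c - 1) div m < n_inner"
proof (rule ccontr)
  assume "\<not> (c - 1) div m < n_inner"
  then have "m * n_inner \<le> m * ((c - 1) div m)" by simp
  also have "\<dots> \<le> c - 1" by simp
  finally show False using assms by simp
qed

lemma parent_lt_n_nodes: "0 < c \<Longrightarrow> c < n_nodes \<Longrightarrow> (c - 1) div m < n_nodes"
  using parent_less by (meson less_trans)

lemma label_inj: "q < n_nodes \<Longrightarrow> q' < n_nodes \<Longrightarrow> lab q = lab q' \<Longrightarrow> q = q'"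
  using label_decreasing by (metis less_irrefl nat_neq_iff)

lemma label_le_t: "q < n_nodes \<Longrightarrow> lab q \<le> t"
  using label_range[of q] root_label root_le by (cases "q = 0") auto

lemma label_ge_1: "q < n_nodes \<Longrightarrow> 1 \<le> lab q"
  using label_range[of q] root_label root_gt by (cases "q = 0") auto

lemma tree_depth_lt_imp_inner:
  assumes "q < n_nodes" "tree_depth m q < k"
  shows "q < n_inner"
proof -
  have "q < tree_size m (Suc (tree_depth m q))" using tree_size_depth_bounds[OF m_pos] by simp
  also have "\<dots> \<le> n_inner"
    using tree_size_mono[OF m_pos, of "Suc (tree_depth m q)" k] assms(2) by simp
  finally show ?thesis .
qed

lemma tree_depth_le:
  assumes "q < n_nodes"
  shows "tree_depth m q \<le> k"
proof (rule ccontr)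
  assume "\<not> tree_depth m q \<le> k"
  then have "n_nodes \<le> tree_size m (tree_depth m q)"
    using tree_size_mono[OF m_pos, of "Suc k" "tree_depth m q"] by simp
  then show False using tree_size_depth_bounds[OF m_pos, of q] assms by simp
qed

lemma tree_edge_props:
  assumes "0 < c" "c < n_nodes"
  shows "pa_src m (tree_edge c) = lab ((c - 1) div m)" "tree_edge c mod m = (c - 1) mod m"
    "tree_edge c < m * t"
proof -
  define p where "p = (c - 1) div m"
  have "p < n_nodes" using parent_lt_n_nodes[OF assms] unfolding p_def .
  then have p: "1 \<le> lab p" "lab p \<le> t" using label_ge_1 label_le_t by auto
  have r: "(c - 1) mod m < m" using m_pos by simp
  have mp: "m * lab p = m * (lab p - 1) + m" using p
    by (metis add.commute le_add_diff_inverse2 mult_Suc_right plus_1_eq_Suc)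
  show "pa_src m (tree_edge c) = lab p"
    unfolding pa_src_eq_iff[OF m_pos] tree_edge_def p_def[symmetric] using p r mp by linarith
  show "tree_edge c mod m = (c - 1) mod m" unfolding tree_edge_def using r by simp
  have "tree_edge c < m * lab p" unfolding tree_edge_def p_def[symmetric] using r mp by simp
  also have "\<dots> \<le> m * t" using p by simp
  finally show "tree_edge c < m * t" .
qed

lemma edge_ok_child:
  assumes "q < n_inner" "lab q = pa_src m i"
  shows "edge_ok i (lab (m * q + 1 + i mod m))"
  unfolding edge_ok_def
proof (intro conjI allI impI)
  fix q' assume q': "q' < n_inner" "lab q' = pa_src m i"
  then have "q' < n_nodes" "q < n_nodes" using assms(1) n_inner_lt_n_nodes less_trans by blast+
  then have "q' = q" using label_inj[of q' q] assms(2) q'(2) by simp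
  then show "lab (m * q + 1 + i mod m) = lab (m * q' + 1 + i mod m)" by simp
next
  assume "\<forall>q'<n_inner. lab q' \<noteq> pa_src m i"
  then show "lab (m * q + 1 + i mod m) \<notin> tree_labels" using assms by blast
qed

lemma edge_ok_label_imp:
  assumes ok: "edge_ok i (lab c)" and c: "c < n_nodes"
  shows "0 < c \<and> i = tree_edge c"
proof (cases "\<exists>q<n_inner. lab q = pa_src m i")
  case True
  then obtain q where q: "q < n_inner" "lab q = pa_src m i" by auto
  have "lab c = lab (m * q + 1 + i mod m)" using ok q unfolding edge_ok_def by auto
  then have "c = m * q + 1 + i mod m"
    using label_inj[OF c child_lt_n_nodes[OF q(1)]] m_pos by simp
  then have "0 < c" "pa_src m i = lab ((c - 1) div m)" "i mod m = (c - 1) mod m"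
    using q m_pos by simp_all
  then show ?thesis using pa_src_decomp[of m i] unfolding tree_edge_def by simp
next
  case False
  then show ?thesis using ok c unfolding edge_ok_def by auto
qed

lemma tree_event_target:
  "xs \<in> tree_event \<Longrightarrow> i < m * t \<Longrightarrow> c < n_nodes \<Longrightarrow> xs ! i = lab c \<Longrightarrow> 0 < c \<and> i = tree_edge c"
  using edge_ok_label_imp unfolding tree_event_def by auto

lemma tree_event_target_src:
  "xs \<in> tree_event \<Longrightarrow> i < m * t \<Longrightarrow> c < n_nodes \<Longrightarrow> xs ! i = lab c \<Longrightarrow>
    0 < c \<and> pa_src m i = lab ((c - 1) div m)"
  using tree_event_target tree_edge_props(1) by blast

lemma tree_event_tree_edge:
  assumes xs: "xs \<in> tree_event" and c: "0 < c" "c < n_nodes"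
  shows "xs ! tree_edge c = lab c"
proof -
  define p where "p = (c - 1) div m"
  have "p < n_inner" using parent_lt_n_inner[OF c] unfolding p_def .
  moreover have "edge_ok (tree_edge c) (xs ! tree_edge c)"
    using xs tree_edge_props[OF c] unfolding tree_event_def by auto
  ultimately have "xs ! tree_edge c = lab (m * p + 1 + tree_edge c mod m)"
    using tree_edge_props[OF c] unfolding edge_ok_def p_def by auto
  also have "m * p + 1 + tree_edge c mod m = c" using tree_edge_props[OF c] c unfolding p_def by simp
  finally show ?thesis .
qed

context
  fixes xs assumes xs: "xs \<in> tree_event" and len: "length xs = m * t"
begin

lemma pa_deg_root: "pa_deg m xs v = m"
proof -
  have "0 < n_nodes" using n_inner_lt_n_nodes by linarith
  then have "xs ! i \<noteq> lab 0" if "i < m * t" for i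
    using tree_event_target[OF xs that] by blast
  then have "{i. i < length xs \<and> xs ! i = v} = {}" using len root_label by auto
  moreover have "card {i. i < length xs \<and> pa_src m i = v} = m"
    using card_pa_src_fibre_complete[OF m_pos, of v "m * t"] root_gt root_le len by simp
  ultimately show ?thesis unfolding pa_deg_def by simp
qed

lemma pa_deg_label:
  assumes "0 < c" "c < n_nodes"
  shows "pa_deg m xs (lab c) = m + 1"
proof -
  have "{i. i < length xs \<and> xs ! i = lab c} = {tree_edge c}"
  proof (intro set_eqI iffI)
    fix i assume "i \<in> {i. i < length xs \<and> xs ! i = lab c}"
    then show "i \<in> {tree_edge c}" using tree_event_target[OF xs _ assms(2)] len by simp
  next
    fix i assume "i \<in> {tree_edge c}"
    then show "i \<in> {i. i < length xs \<and> xs ! i = lab c}"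
      using tree_event_tree_edge[OF xs assms] tree_edge_props(3)[OF assms] len by simp
  qed
  moreover have "card {i. i < length xs \<and> pa_src m i = lab c} = m"
    using card_pa_src_fibre_complete[OF m_pos, of "lab c" "m * t"] label_ge_1[OF assms(2)]
      label_le_t[OF assms(2)] len by simp
  ultimately show ?thesis unfolding pa_deg_def by simp
qed

lemma pa_adj_child:
  assumes "q < n_inner" "j < m"
  shows "pa_adj m xs (lab q) (lab (m * q + 1 + j))"
proof -
  define c where "c = m * q + 1 + j"
  have c: "0 < c" "c < n_nodes" using child_lt_n_nodes[OF assms] unfolding c_def by auto
  have "(c - 1) div m = q" using assms unfolding c_def by simp
  then have "pa_src m (tree_edge c) = lab q" "xs ! tree_edge c = lab c" "tree_edge c < length xs"
    using tree_edge_props[OF c] tree_event_tree_edge[OF xs c] len by auto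
  then show ?thesis unfolding pa_adj_def c_def[symmetric] by (intro exI[of _ "tree_edge c"]) simp
qed

lemma pa_adj_inner_label:
  assumes q: "q < n_inner" and adj: "pa_adj m xs (lab q) w"
  shows "(\<exists>j<m. w = lab (m * q + 1 + j)) \<or> (0 < q \<and> w = lab ((q - 1) div m))"
proof -
  obtain i where i: "i < length xs" "{pa_src m i, xs ! i} = {lab q, w}"
    using adj unfolding pa_adj_def by auto
  from i(2) consider "pa_src m i = lab q" "xs ! i = w" | "pa_src m i = w" "xs ! i = lab q"
    by (auto simp: doubleton_eq_iff)
  then show ?thesis
  proof cases
    case 1
    have "edge_ok i (xs ! i)" using xs i len unfolding tree_event_def by auto
    then have "w = lab (m * q + 1 + i mod m)" using 1 q unfolding edge_ok_def by auto
    then show ?thesis using mod_less_divisor[OF m_pos, of i] by blast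
  next
    case 2
    have "q < n_nodes" using q n_inner_lt_n_nodes by linarith
    then have "0 < q \<and> pa_src m i = lab ((q - 1) div m)"
      using tree_event_target_src[OF xs _ _ 2(2)] i len by simp
    then show ?thesis using 2 by simp
  qed
qed

lemma pa_adj_labels:
  assumes "a < n_nodes" "b < n_nodes" "pa_adj m xs (lab a) (lab b)"
  shows "(0 < b \<and> a = (b - 1) div m) \<or> (0 < a \<and> b = (a - 1) div m)"
proof -
  obtain i where i: "i < length xs" "{pa_src m i, xs ! i} = {lab a, lab b}"
    using assms unfolding pa_adj_def by auto
  from i(2) consider "pa_src m i = lab a" "xs ! i = lab b" | "pa_src m i = lab b" "xs ! i = lab a"
    by (auto simp: doubleton_eq_iff)
  then show ?thesis
  proof cases
    case 1
    then have b: "0 < b" "lab a = lab ((b - 1) div m)"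
      using tree_event_target_src[OF xs _ assms(2) 1(2)] i len by auto
    then show ?thesis using label_inj[OF assms(1) parent_lt_n_nodes[OF b(1) assms(2)]] by simp
  next
    case 2
    then have a: "0 < a" "lab b = lab ((a - 1) div m)"
      using tree_event_target_src[OF xs _ assms(1) 2(2)] i len by auto
    then show ?thesis using label_inj[OF assms(2) parent_lt_n_nodes[OF a(1) assms(1)]] by simp
  qed
qed

abbreviation "adj_rel \<equiv> {(u, u'). pa_adj m xs u u'}"

lemma reachable_imp_label:
  "l \<le> k \<Longrightarrow> (v, w) \<in> adj_rel ^^ l \<Longrightarrow> \<exists>q<n_nodes. tree_depth m q \<le> l \<and> w = lab q"
proof (induction l arbitrary: w)
  case 0
  then show ?case using root_label n_inner_lt_n_nodes by (intro exI[of _ 0]) (auto simp: tree_depth.simps)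
next
  case (Suc l)
  from Suc.prems(2) obtain u where u: "(v, u) \<in> adj_rel ^^ l" "(u, w) \<in> adj_rel" by auto
  obtain q where q: "q < n_nodes" "tree_depth m q \<le> l" "u = lab q"
    using Suc.IH[OF _ u(1)] Suc.prems(1) by auto
  have inner: "q < n_inner" using tree_depth_lt_imp_inner[OF q(1)] q(2) Suc.prems(1) by simp
  have "pa_adj m xs (lab q) w" using u(2) q(3) by simp
  from pa_adj_inner_label[OF inner this] show ?case
  proof (elim disjE exE conjE)
    fix j assume j: "j < m" "w = lab (m * q + 1 + j)"
    show ?thesis using child_lt_n_nodes[OF inner j(1)] tree_depth_child[OF m_pos j(1), of q] q(2) j(2)
      by (intro exI[of _ "m * q + 1 + j"]) auto
  next
    assume "0 < q" "w = lab ((q - 1) div m)"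
    then show ?thesis using tree_depth_parent[OF m_pos, of q] q parent_lt_n_nodes[of q]
      by (intro exI[of _ "(q - 1) div m"]) auto
  qed
qed

lemma label_reachable: "q < n_nodes \<Longrightarrow> (v, lab q) \<in> adj_rel ^^ tree_depth m q"
proof (induction q rule: less_induct)
  case (less q)
  show ?case
  proof (cases "q = 0")
    case True
    then show ?thesis using root_label by (simp add: tree_depth.simps)
  next
    case False
    define p where "p = (q - 1) div m"
    have "p < q" unfolding p_def using False parent_less by simp
    then have "(v, lab p) \<in> adj_rel ^^ tree_depth m p" using less by simp
    moreover have "(lab p, lab q) \<in> adj_rel"
    proof -
      have "p < n_inner" unfolding p_def using parent_lt_n_inner False less.prems by simp
      moreover have "q = m * p + 1 + (q - 1) mod m" unfolding p_def using False by simp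
      ultimately show ?thesis using pa_adj_child[of p "(q - 1) mod m"] m_pos by simp
    qed
    moreover have "tree_depth m q = Suc (tree_depth m p)"
      using tree_depth_parent[OF m_pos] False unfolding p_def by simp
    ultimately show ?thesis by auto
  qed
qed

lemma pa_ball_eq_tree_labels: "pa_ball m xs k v = tree_labels"
proof
  show "pa_ball m xs k v \<subseteq> tree_labels"
    unfolding pa_ball_def using reachable_imp_label by fastforce
  show "tree_labels \<subseteq> pa_ball m xs k v"
    unfolding pa_ball_def using label_reachable tree_depth_le by fastforce
qed

lemma no_self_loop_in_tree: "\<not> has_self_loop_in m xs tree_labels"
proof
  assume "has_self_loop_in m xs tree_labels"
  then obtain i c where i: "i < length xs" "pa_src m i = xs ! i" "xs ! i = lab c" "c < n_nodes"
    unfolding has_self_loop_in_def by auto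
  then have c: "0 < c" "lab ((c - 1) div m) = lab c"
    using tree_event_target_src[OF xs _ i(4) i(3)] len by auto
  then have "(c - 1) div m = c" using label_inj[OF parent_lt_n_nodes[OF c(1) i(4)] i(4)] by simp
  then show False using parent_less[OF c(1)] by simp
qed

lemma no_multi_edge_in_tree: "\<not> has_multi_edge_in m xs tree_labels"
proof
  assume "has_multi_edge_in m xs tree_labels"
  then obtain i i' c where i: "i < length xs" "i' < length xs" "i \<noteq> i'" "xs ! i = lab c" "c < n_nodes"
    and same: "{pa_src m i, xs ! i} = {pa_src m i', xs ! i'}"
    unfolding has_multi_edge_in_def by auto
  have c: "0 < c" "i = tree_edge c" using tree_event_target[OF xs _ i(5) i(4)] i len by auto
  define p where "p = (c - 1) div m"
  have src: "pa_src m i = lab p" using tree_edge_props[OF c(1) i(5)] c unfolding p_def by simp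
  from same consider "xs ! i' = xs ! i" | "xs ! i' = pa_src m i" "pa_src m i' = xs ! i"
    by (auto simp: doubleton_eq_iff)
  then show False
  proof cases
    case 1
    then show False using tree_event_target[OF xs _ i(5)] c i len by auto
  next
    case 2
    have "p < n_nodes" unfolding p_def using parent_lt_n_nodes c i by simp
    then have "0 < p" "lab ((p - 1) div m) = lab c"
      using tree_event_target_src[OF xs _ _ ] 2 src i len by auto
    then have "(p - 1) div m = c"
      using label_inj[OF parent_lt_n_nodes[OF _ \<open>p < n_nodes\<close>] i(5)] by simp
    moreover have "(p - 1) div m < p" "p < c" using parent_less \<open>0 < p\<close> c unfolding p_def by auto
    ultimately show False by simp
  qed
qed

text \<open>On a cycle, the node of largest number has two distinct neighbours on the cycle, and both
  would have to be its parent.\<close>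
lemma no_cycle_in_tree: "\<not> has_cycle_in m xs tree_labels"
proof
  assume "has_cycle_in m xs tree_labels"
  then obtain cs where cs: "3 \<le> length cs" "distinct cs" "set cs \<subseteq> tree_labels"
    "\<forall>i < length cs - 1. pa_adj m xs (cs ! i) (cs ! Suc i)" "pa_adj m xs (last cs) (hd cs)"
    unfolding has_cycle_in_def by auto
  define node where "node = inv_into {0..<n_nodes} lab"
  have node: "node (cs ! i) < n_nodes" "lab (node (cs ! i)) = cs ! i" if "i < length cs" for i
  proof -
    have "cs ! i \<in> tree_labels" using cs(3) nth_mem[OF that] by blast
    then show "node (cs ! i) < n_nodes" "lab (node (cs ! i)) = cs ! i"
      unfolding node_def by (metis atLeastLessThan_iff inv_into_into, simp add: f_inv_into_f)
  qed
  have "0 < length cs" using cs(1) by linarith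
  then obtain p where p: "p < length cs" and max: "\<And>i. i < length cs \<Longrightarrow> node (cs ! i) \<le> node (cs ! p)"
    using ex_has_greatest_nat[of "\<lambda>i. i < length cs" 0 "\<lambda>i. node (cs ! i)" n_nodes] node(1)
    by blast
  have parent: "node (cs ! x) = (node (cs ! p) - 1) div m"
    if x: "x < length cs" "pa_adj m xs (cs ! p) (cs ! x)" for x
  proof -
    have "pa_adj m xs (lab (node (cs ! p))) (lab (node (cs ! x)))" using x node p by simp
    then have "(0 < node (cs ! x) \<and> node (cs ! p) = (node (cs ! x) - 1) div m)
        \<or> (0 < node (cs ! p) \<and> node (cs ! x) = (node (cs ! p) - 1) div m)"
      using pa_adj_labels node(1) p x(1) by blast
    moreover have "\<not> (0 < node (cs ! x) \<and> node (cs ! p) = (node (cs ! x) - 1) div m)"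
      using parent_less[of "node (cs ! x)"] max[OF x(1)] by auto
    ultimately show ?thesis by blast
  qed
  obtain a b where ab: "a < length cs" "b < length cs" "a \<noteq> b" "a \<noteq> p" "b \<noteq> p"
    "pa_adj m xs (cs ! p) (cs ! a)" "pa_adj m xs (cs ! p) (cs ! b)"
    by (rule cycle_two_neighbours[OF pa_adj_commute[THEN iffD1] cs(1,4,5) p])
  have "node (cs ! a) = node (cs ! b)" using parent ab by simp
  then have "cs ! a = cs ! b" using node(2) ab(1,2) by metis
  then show False using cs(2) ab(1-3) by (simp add: nth_eq_iff_index_eq)
qed

lemma root_min_k_connected: "min_k_connected m t xs k v"
proof -
  have "t div 4 < w \<and> w \<le> t div 2 \<and> pa_deg m xs w = m + 1"
    if w: "w \<in> tree_labels" "w \<noteq> v" for w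
  proof -
    obtain q where q: "q < n_nodes" "w = lab q" using w by auto
    then have "q \<noteq> 0" using w root_label by (cases q) auto
    then show ?thesis using label_range[of q] pa_deg_label[of q] q by simp
  qed
  then show ?thesis unfolding min_k_connected_def pa_ball_eq_tree_labels
    using root_gt root_le pa_deg_root no_self_loop_in_tree no_multi_edge_in_tree no_cycle_in_tree
    by blast
qed

end

end

lemma prod_if_ge_power:
  fixes a b :: real
  assumes "finite S" "0 \<le> a" "a \<le> 1" "0 \<le> b" "b \<le> 1" "card (S \<inter> {i. P i}) \<le> p"
  shows "a ^ p * b ^ card S \<le> (\<Prod>i\<in>S. if P i then a else b)"
proof -
  have "a ^ p \<le> a ^ card (S \<inter> {i. P i})" using assms(2,3,6) by (rule power_decreasing[rotated 1])
  moreover have "b ^ card S \<le> b ^ card (S \<inter> - {i. P i})"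
    using assms(1,4,5) by (intro power_decreasing card_mono) auto
  ultimately have "a ^ p * b ^ card S \<le> a ^ card (S \<inter> {i. P i}) * b ^ card (S \<inter> - {i. P i})"
    using assms(2,4) by (intro mult_mono) auto
  then show ?thesis using assms(1) by (simp add: prod.If_cases)
qed

context labelled_tree
begin

definition forced :: "nat \<Rightarrow> bool" where
  "forced i \<longleftrightarrow> (\<exists>q<n_inner. lab q = pa_src m i)"

lemma card_forced_le: "card ({..<m * t} \<inter> {i. forced i}) \<le> m * n_inner"
proof -
  have "card ({..<m * t} \<inter> {i. forced i}) \<le> card (lab ` {0..<n_inner} \<times> {..<m})"
  proof (rule card_inj_on_le[where f = "\<lambda>i. (pa_src m i, i mod m)"])
    show "inj_on (\<lambda>i. (pa_src m i, i mod m)) ({..<m * t} \<inter> {i. forced i})"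
      by (rule inj_onI) (metis prod.inject pa_src_decomp)
    show "(\<lambda>i. (pa_src m i, i mod m)) ` ({..<m * t} \<inter> {i. forced i}) \<subseteq> lab ` {0..<n_inner} \<times> {..<m}"
      unfolding forced_def using m_pos by (force intro: image_eqI)
  qed simp
  also have "\<dots> \<le> n_inner * m"
    using card_image_le[of "{0..<n_inner}" lab] by (simp add: card_cartesian_product)
  finally show ?thesis by (simp add: mult.commute)
qed

context
  fixes i xs
  assumes i: "i < m * t" and valid: "pa_valid_hist m i xs"
    and prefix: "\<forall>i'<i. xs ! i' \<in> {w. edge_ok i' w}"
begin

lemma length_prefix: "length xs = i"
  using valid unfolding pa_valid_hist_def by simp

lemma pa_deg_label_prefix_le: "c < n_nodes \<Longrightarrow> pa_deg m xs (lab c) \<le> m + 1"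
proof -
  assume c: "c < n_nodes"
  have "{i'. i' < length xs \<and> xs ! i' = lab c} \<subseteq> {tree_edge c}"
    using prefix length_prefix edge_ok_label_imp[OF _ c] by auto
  then have "card {i'. i' < length xs \<and> xs ! i' = lab c} \<le> 1"
    using card_mono[of "{tree_edge c}"] by fastforce
  then show ?thesis using card_pa_src_fibre_le[OF m_pos, of "length xs" "lab c"]
    unfolding pa_deg_def by simp
qed

lemma measure_edge_ok_forced_ge:
  assumes "forced i"
  shows "forced_lb t \<le> measure (pa_next m \<delta> xs) {w. edge_ok i w}"
proof -
  obtain q where q: "q < n_inner" "lab q = pa_src m i" using assms unfolding forced_def by auto
  define c where "c = m * q + 1 + i mod m"
  define w where "w = lab c"
  have c: "c < n_nodes" unfolding c_def using child_lt_n_nodes[OF q(1)] m_pos by simp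
  have "q < c" unfolding c_def using m_pos by (simp add: less_Suc_eq_le trans_le_add1)
  have now: "length xs div m + 1 = lab q" using q length_prefix unfolding pa_src_def by simp
  have w_old: "w < lab q" unfolding w_def using label_decreasing[OF \<open>q < c\<close> c] .
  have w_pos: "1 \<le> w" unfolding w_def using label_ge_1[OF c] .
  have "m * w \<le> m * (i div m)" using w_old now length_prefix by simp
  also have "\<dots> \<le> i" by simp
  finally have deg: "real m \<le> real (pa_deg m xs w)"
    using pa_deg_complete_ge[OF m_pos w_pos] length_prefix by simp
  define c_i where "c_i = pa_c m \<delta> (i div m + 1) (i mod m + 1)"
  have c_i: "0 < c_i" "c_i \<le> 2 * real m * real t + 1"
    unfolding c_i_def using pa_c_pos pa_c_le[OF i] by auto
  have "forced_lb t \<le> (real m + \<delta>) / c_i"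
    unfolding forced_lb_def using c_i delta_gt by (intro divide_left_mono) auto
  also have "\<dots> \<le> (real (pa_deg m xs w) + \<delta>) / c_i"
    using deg c_i by (simp add: divide_right_mono)
  also have "\<dots> = pa_next_weight m \<delta> xs w"
    using w_old w_pos now length_prefix unfolding pa_next_weight_def c_i_def by (auto simp: Let_def)
  also have "\<dots> = measure (pa_next m \<delta> xs) {w}"
    using pmf_pa_next[OF valid] by (simp add: measure_pmf_single)
  also have "\<dots> \<le> measure (pa_next m \<delta> xs) {w. edge_ok i w}"
    using edge_ok_child[OF q] unfolding w_def c_def by (intro measure_pmf.finite_measure_mono) auto
  finally show ?thesis .
qed

lemma pmf_pa_next_label_le:
  assumes "w \<in> tree_labels" "4 \<le> t"
  shows "pmf (pa_next m \<delta> xs) w \<le> (real m + 2) / (real m * real (t div 4))"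
proof (cases "length xs div m + 1 < w")
  case True
  then show ?thesis using pmf_pa_next[OF valid] pa_next_weight_eq_0 by simp
next
  case False
  obtain c where c: "c < n_nodes" "w = lab c" using assms by auto
  have "t div 4 < w" using c label_range[of c] root_label root_gt by (cases "c = 0") auto
  moreover have "1 \<le> w" using label_ge_1[OF c(1)] c(2) by simp
  ultimately have w: "t div 4 < w" "1 \<le> w" by simp_all
  have t4: "1 \<le> t div 4" using assms(2) by simp
  define now where "now = i div m + 1"
  have w_now: "w \<le> now" using False length_prefix unfolding now_def by simp
  have now_ne_1: "now \<noteq> 1" using w_now w t4 by linarith
  define c_i where "c_i = pa_c m \<delta> (i div m + 1) (i mod m + 1)"
  have "m * (t div 4) \<le> m * (i div m)" using w_now w unfolding now_def by simp
  also have "\<dots> \<le> i" by simp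
  finally have "real m * real (t div 4) \<le> c_i" unfolding c_i_def by (rule pa_c_ge)
  moreover have "0 < real m * real (t div 4)" using m_pos t4 by simp
  ultimately have c_i: "real m * real (t div 4) \<le> c_i" "0 < real m * real (t div 4)" by simp_all
  have deg: "real (pa_deg m xs w) \<le> real m + 1" using pa_deg_label_prefix_le[OF c(1)] c(2) by simp
  have "pa_next_weight m \<delta> xs w \<le> (real m + 2) / c_i"
  proof (cases "w = now")
    case True
    have "real (i mod m + 1) * \<delta> / real m \<le> 0"
      using delta_neg by (simp add: divide_nonpos_nonneg mult_nonneg_nonpos)
    moreover have "pa_next_weight m \<delta> xs w
        = (real (pa_deg m xs w) + 1 + real (i mod m + 1) * \<delta> / real m) / c_i"
      using True now_ne_1 length_prefix unfolding pa_next_weight_def c_i_def now_def by (auto simp: Let_def)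
    ultimately show ?thesis using deg c_i by (simp add: divide_right_mono)
  next
    case False
    have "pa_next_weight m \<delta> xs w = (real (pa_deg m xs w) + \<delta>) / c_i"
      using False w_now w now_ne_1 length_prefix unfolding pa_next_weight_def c_i_def now_def
      by (auto simp: Let_def)
    then show ?thesis using deg delta_neg c_i by (simp add: divide_right_mono)
  qed
  also have "\<dots> \<le> (real m + 2) / (real m * real (t div 4))"
    using c_i by (intro divide_left_mono) auto
  finally show ?thesis using pmf_pa_next[OF valid] by simp
qed

lemma measure_edge_ok_free_ge:
  assumes "\<not> forced i" "4 \<le> t"
  shows "1 - hit_ub t k \<le> measure (pa_next m \<delta> xs) {w. edge_ok i w}"
proof -
  have "measure (pa_next m \<delta> xs) tree_labels = (\<Sum>w\<in>tree_labels. pmf (pa_next m \<delta> xs) w)"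
    by (rule measure_measure_pmf_finite) simp
  also have "\<dots> \<le> real (card tree_labels) * ((real m + 2) / (real m * real (t div 4)))"
    by (rule sum_bounded_above) (use pmf_pa_next_label_le[OF _ assms(2)] in auto)
  also have "\<dots> \<le> real n_nodes * ((real m + 2) / (real m * real (t div 4)))"
    by (intro mult_right_mono of_nat_mono) (use card_image_le[of "{0..<n_nodes}" lab] in simp_all)
  also have "\<dots> = hit_ub t k" unfolding hit_ub_def by simp
  finally have "measure (pa_next m \<delta> xs) tree_labels \<le> hit_ub t k" .
  moreover have "{w. edge_ok i w} = UNIV - tree_labels"
    using assms(1) unfolding edge_ok_def forced_def by auto
  ultimately show ?thesis using measure_pmf.prob_compl[of tree_labels "pa_next m \<delta> xs"] by simp
qed

end

lemma measure_tree_event_ge: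
  assumes "4 \<le> t" "hit_ub t k \<le> 1"
  shows "forced_lb t ^ (m * n_inner) * (1 - hit_ub t k) ^ (m * t) \<le> measure (PA m \<delta> t) tree_event"
proof -
  define b where "b i = (if forced i then forced_lb t else 1 - hit_ub t k)" for i
  have b_nonneg: "0 \<le> b i" for i unfolding b_def using forced_lb_nonneg assms(2) by simp
  have lower: "(\<Prod>i<m * t. b i) \<le> measure (PA m \<delta> t) tree_event"
    unfolding PA_def tree_event_def
  proof (rule measure_pa_hist_prefix_ge[OF b_nonneg])
    fix i xs
    assume "i < m * t" "xs \<in> set_pmf (pa_hist m \<delta> i)" "\<forall>i'<i. xs ! i' \<in> {w. edge_ok i' w}"
    then show "b i \<le> measure (pa_next m \<delta> xs) {w. edge_ok i w}"
      using measure_edge_ok_forced_ge measure_edge_ok_free_ge pa_hist_valid assms(1)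
      unfolding b_def by auto
  qed
  have "0 < t" using root_gt root_le by linarith
  then have "forced_lb t ^ (m * n_inner) * (1 - hit_ub t k) ^ card {..<m * t} \<le> (\<Prod>i<m * t. b i)"
    unfolding b_def using forced_lb_nonneg forced_lb_le_1 hit_ub_nonneg[of t k] assms(2) card_forced_le
    by (intro prod_if_ge_power) auto
  with lower show ?thesis by (metis card_lessThan order_trans)
qed

end

section \<open>Summing over labellings\<close>

context pa_model
begin

definition label_gap :: "nat \<Rightarrow> nat \<Rightarrow> nat" where
  "label_gap t k = (t div 2 - t div 4) div tree_size m (Suc k)"

definition label_interval :: "nat \<Rightarrow> nat \<Rightarrow> nat \<Rightarrow> nat set" where
  "label_interval t k q = {t div 2 - q * label_gap t k <.. t div 2 - (q - 1) * label_gap t k}"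

definition tree_labellings :: "nat \<Rightarrow> nat \<Rightarrow> nat \<Rightarrow> (nat \<Rightarrow> nat) set" where
  "tree_labellings t k v =
     PiE {0..<tree_size m (Suc k)} (\<lambda>q. if q = 0 then {v} else label_interval t k q)"

lemma label_gap_mult_le: "q \<le> tree_size m (Suc k) \<Longrightarrow> q * label_gap t k \<le> t div 2 - t div 4"
  using mult_le_mono1[of q "tree_size m (Suc k)" "label_gap t k"]
    div_times_less_eq_dividend[of "t div 2 - t div 4" "tree_size m (Suc k)"]
  unfolding label_gap_def by (simp add: mult.commute)

lemma tree_labelling_nth:
  assumes "lab \<in> tree_labellings t k v" "q < tree_size m (Suc k)"
  shows "lab q \<in> (if q = 0 then {v} else label_interval t k q)"
  using PiE_mem[OF assms(1)[unfolded tree_labellings_def], of q] assms(2) by simp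

lemma labelled_tree_of_labelling:
  assumes lab: "lab \<in> tree_labellings t k v" and v: "t div 2 < v" "v \<le> t"
  shows "labelled_tree m \<delta> t k v lab"
proof -
  define L where "L = label_gap t k"
  have interval: "t div 2 - q * L < lab q \<and> lab q \<le> t div 2 - (q - 1) * L"
    if "0 < q" "q < tree_size m (Suc k)" for q
    using tree_labelling_nth[OF lab that(2)] that unfolding label_interval_def L_def by simp
  show ?thesis
  proof unfold_locales
    show "lab 0 = v" using tree_labelling_nth[OF lab, of 0] by simp
    show "t div 2 < v" "v \<le> t" using v by auto
  next
    fix q assume q: "0 < q" "q < tree_size m (Suc k)"
    then have "t div 4 \<le> t div 2 - q * L" using label_gap_mult_le[of q k t] unfolding L_def by simp
    then show "t div 4 < lab q \<and> lab q \<le> t div 2" using interval[OF q] by auto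
  next
    fix q q' assume q: "q < q'" "q' < tree_size m (Suc k)"
    show "lab q' < lab q"
    proof (cases "q = 0")
      case True
      then show ?thesis
        using interval[of q'] q tree_labelling_nth[OF lab, of 0] v by auto
    next
      case False
      have "q * L \<le> (q' - 1) * L" using q by (intro mult_le_mono1) simp
      then have "t div 2 - (q' - 1) * L \<le> t div 2 - q * L" by (rule diff_le_mono2)
      then show ?thesis using interval[of q'] interval[of q] q False by fastforce
    qed
  qed
qed

lemma card_tree_labellings: "card (tree_labellings t k v) = label_gap t k ^ (m * tree_size m k)"
proof -
  have "card (tree_labellings t k v)
      = (\<Prod>q\<in>{0..<tree_size m (Suc k)}. card (if q = 0 then {v} else label_interval t k q))"
    unfolding tree_labellings_def by (rule card_PiE) simp
  also have "\<dots> = (\<Prod>q\<in>{0..<tree_size m (Suc k)}. if q = 0 then 1 else label_gap t k)"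
  proof (rule prod.cong)
    fix q assume "q \<in> {0..<tree_size m (Suc k)}"
    then have "q * label_gap t k \<le> t div 2" using label_gap_mult_le[of q k t] by simp
    moreover have "(q - 1) * label_gap t k \<le> q * label_gap t k" by simp
    ultimately show "card (if q = 0 then {v} else label_interval t k q) = (if q = 0 then 1 else label_gap t k)"
      unfolding label_interval_def by (auto simp: diff_mult_distrib)
  qed simp
  also have "\<dots> = (\<Prod>q\<in>{1..<tree_size m (Suc k)}. label_gap t k)"
    by (subst prod.atLeast_Suc_lessThan) auto
  also have "\<dots> = label_gap t k ^ (m * tree_size m k)" by simp
  finally show ?thesis .
qed

text \<open>A history in the tree event of a labelling determines the labelling: the label of node
  c > 0 is the target of the edge tree_edge c, which only depends on the label of its parent.\<close>
lemma tree_events_disjoint: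
  assumes lab1: "lab1 \<in> tree_labellings t k v" and lab2: "lab2 \<in> tree_labellings t k v"
    and v: "t div 2 < v" "v \<le> t"
    and xs1: "xs \<in> labelled_tree.tree_event m t k lab1"
    and xs2: "xs \<in> labelled_tree.tree_event m t k lab2"
  shows "lab1 = lab2"
proof -
  interpret T1: labelled_tree m \<delta> t k v lab1 using labelled_tree_of_labelling[OF lab1 v] .
  interpret T2: labelled_tree m \<delta> t k v lab2 using labelled_tree_of_labelling[OF lab2 v] .
  have eq: "lab1 q = lab2 q" if "q < tree_size m (Suc k)" for q
    using that
  proof (induction q rule: less_induct)
    case (less q)
    show ?case
    proof (cases "q = 0")
      case True
      then show ?thesis using T1.root_label T2.root_label by simp
    next
      case False
      have "(q - 1) div m < q" using T1.parent_less False by simp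
      then have "T1.tree_edge q = T2.tree_edge q"
        using less unfolding T1.tree_edge_def T2.tree_edge_def by simp
      moreover have "xs ! T1.tree_edge q = lab1 q"
        using T1.tree_event_tree_edge[OF xs1, of q] False less.prems by simp
      moreover have "xs ! T2.tree_edge q = lab2 q"
        using T2.tree_event_tree_edge[OF xs2, of q] False less.prems by simp
      ultimately show ?thesis by simp
    qed
  qed
  show ?thesis
    using lab1 lab2 eq unfolding tree_labellings_def by (intro PiE_ext) auto
qed

lemma measure_min_k_connected_ge:
  assumes v: "t div 2 < v" "v \<le> t" and "4 \<le> t" "hit_ub t k \<le> 1"
  shows "real (label_gap t k ^ (m * tree_size m k)) *
      (forced_lb t ^ (m * tree_size m k) * (1 - hit_ub t k) ^ (m * t))
    \<le> measure (PA m \<delta> t) {xs. min_k_connected m t xs k v}"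
proof -
  define c where "c = forced_lb t ^ (m * tree_size m k) * (1 - hit_ub t k) ^ (m * t)"
  define U where "U = (\<Union>lab\<in>tree_labellings t k v. labelled_tree.tree_event m t k lab)"
  have fin: "finite (tree_labellings t k v)"
    unfolding tree_labellings_def label_interval_def by (intro finite_PiE) auto
  have each: "c \<le> measure (PA m \<delta> t) (labelled_tree.tree_event m t k lab)"
    if "lab \<in> tree_labellings t k v" for lab
  proof -
    interpret labelled_tree m \<delta> t k v lab using labelled_tree_of_labelling[OF that v] .
    show ?thesis using measure_tree_event_ge assms(3,4) unfolding c_def by simp
  qed
  have "disjoint_family_on (labelled_tree.tree_event m t k) (tree_labellings t k v)"
    unfolding disjoint_family_on_def using tree_events_disjoint[OF _ _ v] by blast
  then have "measure (PA m \<delta> t) U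
      = (\<Sum>lab\<in>tree_labellings t k v. measure (PA m \<delta> t) (labelled_tree.tree_event m t k lab))"
    unfolding U_def by (intro measure_pmf.finite_measure_finite_Union fin) auto
  also have "\<dots> \<ge> real (card (tree_labellings t k v)) * c"
    using sum_mono[OF each] by simp
  finally have "real (card (tree_labellings t k v)) * c \<le> measure (PA m \<delta> t) U" .
  also have "\<dots> = measure (PA m \<delta> t) (U \<inter> set_pmf (PA m \<delta> t))"
    by (simp add: measure_Int_set_pmf)
  also have "\<dots> \<le> measure (PA m \<delta> t) {xs. min_k_connected m t xs k v}"
  proof (rule measure_pmf.finite_measure_mono)
    show "U \<inter> set_pmf (PA m \<delta> t) \<subseteq> {xs. min_k_connected m t xs k v}"
      unfolding U_def
    proof safe
      fix lab xs
      assume "lab \<in> tree_labellings t k v" "xs \<in> labelled_tree.tree_event m t k lab"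
        "xs \<in> set_pmf (PA m \<delta> t)"
      moreover have "length xs = m * t"
        using pa_hist_valid \<open>xs \<in> set_pmf (PA m \<delta> t)\<close> unfolding PA_def pa_valid_hist_def by auto
      ultimately show "min_k_connected m t xs k v"
        using labelled_tree.root_min_k_connected[OF labelled_tree_of_labelling[OF _ v]] by blast
    qed
  qed simp
  finally show ?thesis unfolding c_def card_tree_labellings .
qed

lemma expectation_M_count_ge:
  assumes "4 \<le> t" "hit_ub t k \<le> 1"
  shows "real (t - t div 2) * (real (label_gap t k ^ (m * tree_size m k)) *
      (forced_lb t ^ (m * tree_size m k) * (1 - hit_ub t k) ^ (m * t)))
    \<le> measure_pmf.expectation (PA m \<delta> t) (\<lambda>xs. real (M_count m t xs k))"
    (is "_ * ?c \<le> _")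
proof -
  define V where "V = {t div 2<..t}"
  have count: "real (M_count m t xs k) = (\<Sum>v\<in>V. indicator {xs. min_k_connected m t xs k v} xs)" for xs
  proof -
    have "{v. min_k_connected m t xs k v} = V \<inter> {v. min_k_connected m t xs k v}"
      unfolding V_def min_k_connected_def by auto
    then have "real (M_count m t xs k) = (\<Sum>v\<in>V \<inter> {v. min_k_connected m t xs k v}. 1)"
      unfolding M_count_def by simp
    also have "\<dots> = (\<Sum>v\<in>V. if v \<in> {v. min_k_connected m t xs k v} then 1 else 0)"
      by (rule sum.inter_restrict) (simp add: V_def)
    also have "\<dots> = (\<Sum>v\<in>V. indicator {xs. min_k_connected m t xs k v} xs)"
      by (rule sum.cong) (simp_all add: indicator_def)
    finally show ?thesis .
  qed
  have "integrable (measure_pmf (PA m \<delta> t)) (indicator A :: _ \<Rightarrow> real)" for A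
    by (rule measure_pmf.integrable_const_bound[where B = 1]) auto
  then have "measure_pmf.expectation (PA m \<delta> t) (\<lambda>xs. real (M_count m t xs k))
      = (\<Sum>v\<in>V. measure (PA m \<delta> t) {xs. min_k_connected m t xs k v})"
    unfolding count by (subst Bochner_Integration.integral_sum) auto
  also have "\<dots> \<ge> (\<Sum>v\<in>V. ?c)"
    using measure_min_k_connected_ge assms unfolding V_def by (intro sum_mono) auto
  finally show ?thesis unfolding V_def by simp
qed

end

section \<open>Asymptotics\<close>

lemma exp_le_one_minus_power:
  fixes x :: real
  assumes "0 \<le> x" "x \<le> 1/2"
  shows "exp (- (2 * real n * x)) \<le> (1 - x) ^ n"
proof -
  have "x * x \<le> 1/2 * x" using assms by (intro mult_right_mono) auto
  then have "- 2 * x \<le> ln (1 - x)"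
    using ln_one_minus_pos_lower_bound[OF assms] by (simp add: power2_eq_square)
  then have "exp (- (2 * real n * x)) \<le> exp (real n * ln (1 - x))"
    using mult_left_mono[of "- 2 * x" "ln (1 - x)" "real n"] by simp
  also have "\<dots> = (1 - x) ^ n" using assms by (simp add: exp_of_nat_mult)
  finally show ?thesis .
qed

lemma real_nat_round_le: "x \<le> y \<Longrightarrow> 0 \<le> y \<Longrightarrow> real (nat (round x)) \<le> y + 1"
  using of_int_round_le[of x] by (simp add: real_nat)

lemma tree_size_le_ln_powr:
  fixes t \<eta> :: real
  assumes "2 \<le> m" "0 < ln t" "real k \<le> \<eta> * ln (ln t) / ln (real m) + 1"
  shows "real (tree_size m (Suc k)) \<le> real m ^ 2 * ln t powr \<eta>"
proof -
  have m: "1 < real m" "0 < ln (real m)" using assms(1) by simp_all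
  have "real (tree_size m (Suc k)) \<le> real (m ^ Suc k)"
    using tree_size_le_power[OF assms(1), of "Suc k"] by linarith
  also have "\<dots> = real m powr real (Suc k)"
    using powr_realpow[of "real m" "Suc k"] m by (simp only: of_nat_power)
  also have "\<dots> \<le> real m powr (\<eta> * ln (ln t) / ln (real m) + 2)"
    using assms(3) m by (intro powr_mono) auto
  also have "\<dots> = real m powr (\<eta> * ln (ln t) / ln (real m)) * real m powr 2" by (simp add: powr_add)
  also have "real m powr (\<eta> * ln (ln t) / ln (real m)) = ln t powr \<eta>"
    using m assms(2) unfolding powr_def by simp
  also have "real m powr 2 = real m ^ 2" using m by (simp add: powr_realpow[of _ 2, simplified])
  finally show ?thesis by (simp add: mult.commute)
qed

context pa_model
begin

definition \<gamma> :: real where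
  "\<gamma> = (real m + \<delta>) / (24 * real m)"

lemma \<gamma>_pos: "0 < \<gamma>" and \<gamma>_le_1: "\<gamma> \<le> 1"
  unfolding \<gamma>_def using delta_gt delta_neg m_ge_2 by (simp_all add: field_simps)

lemma hit_ub_le:
  assumes "16 \<le> t"
  shows "hit_ub t k \<le> 16 * real (tree_size m (Suc k)) / real t"
proof -
  define N where "N = real (tree_size m (Suc k))"
  have "t \<le> 4 * (t div 4) + 3" by linarith
  then have "real t \<le> 4 * real (t div 4) + 3" by (metis of_nat_le_iff of_nat_add of_nat_mult of_nat_numeral)
  then have "real t / 8 \<le> real (t div 4)" using assms by linarith
  moreover have "0 \<le> N" "2 \<le> real m" using m_ge_2 unfolding N_def by simp_all
  ultimately have "N * (real m + 2) / (real m * real (t div 4)) \<le> N * (2 * real m) / (real m * (real t / 8))"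
    using assms by (intro frac_le mult_left_mono mult_mono) auto
  also have "\<dots> = 16 * N / real t" using m_pos assms by (simp add: field_simps)
  finally show ?thesis unfolding hit_ub_def N_def .
qed

lemma label_gap_ge:
  assumes "16 \<le> t" "32 * real (tree_size m (Suc k)) \<le> real t"
  shows "real t / (8 * real (tree_size m (Suc k))) \<le> real (label_gap t k)"
proof -
  define N where "N = tree_size m (Suc k)"
  define A where "A = t div 2 - t div 4"
  have N: "1 \<le> real N" unfolding N_def by simp
  have "t \<le> 2 * (t div 2) + 1" "4 * (t div 4) \<le> t" "t div 4 \<le> t div 2" by linarith+
  then have A: "real t / 4 - 1 / 2 \<le> real A" unfolding A_def by (simp add: of_nat_diff)
  have "A mod N < N" "N * (A div N) + A mod N = A" using N by simp_all
  then have "A < N * (A div N) + N" by linarith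
  then have "real A < real (N * (A div N) + N)" by (simp only: of_nat_less_iff)
  then have "real A < real N * (real (label_gap t k) + 1)"
    unfolding label_gap_def A_def[symmetric] N_def[symmetric] by (simp add: algebra_simps)
  then have "real A / real N - 1 < real (label_gap t k)" using N by (simp add: field_simps)
  moreover have "real t / (8 * real N) \<le> (real t / 4 - 1 / 2) / real N - 1"
    using N assms(2)[folded N_def] by (simp add: field_simps)
  moreover have "(real t / 4 - 1 / 2) / real N \<le> real A / real N"
    using A N by (simp add: divide_right_mono)
  ultimately show ?thesis unfolding N_def by linarith
qed

lemma forced_lb_ge:
  assumes "1 \<le> t"
  shows "(real m + \<delta>) / (3 * real m * real t) \<le> forced_lb t"
proof -
  have "1 * 1 \<le> real m * real t" using m_ge_2 assms by (intro mult_mono) auto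
  then have "2 * real m * real t + 1 \<le> 3 * real m * real t" by simp
  moreover have "0 \<le> 2 * real m * real t" by simp
  then have "0 < 2 * real m * real t + 1" by linarith
  ultimately show ?thesis
    unfolding forced_lb_def using delta_gt by (intro divide_left_mono) auto
qed

text \<open>Each of the e = m I factors L forced_lb t is at least \<gamma>/N, and e < N.\<close>
lemma labelling_weight_ge:
  assumes "16 \<le> t" "32 * real (tree_size m (Suc k)) \<le> real t"
  shows "exp (- (real (tree_size m (Suc k)) * ln (real (tree_size m (Suc k)) / \<gamma>)))
    \<le> real (label_gap t k ^ (m * tree_size m k)) * forced_lb t ^ (m * tree_size m k)"
proof -
  define N where "N = tree_size m (Suc k)"
  define e where "e = m * tree_size m k"
  have N: "1 \<le> real N" unfolding N_def by simp
  have "\<gamma> / real N = (real t / (8 * real N)) * ((real m + \<delta>) / (3 * real m * real t))"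
    unfolding \<gamma>_def using m_pos assms(1) N by (simp add: field_simps)
  also have "\<dots> \<le> real (label_gap t k) * forced_lb t"
    using label_gap_ge[OF assms] forced_lb_ge[of t] assms(1) delta_gt unfolding N_def
    by (intro mult_mono) auto
  finally have weight: "\<gamma> / real N \<le> real (label_gap t k) * forced_lb t" .
  have ratio: "0 \<le> \<gamma> / real N" "\<gamma> / real N \<le> 1" using \<gamma>_pos \<gamma>_le_1 N by (simp_all add: field_simps)
  have "- (real N * ln (real N / \<gamma>)) = real N * ln (\<gamma> / real N)"
    using \<gamma>_pos N by (simp add: ln_div algebra_simps)
  then have "exp (- (real N * ln (real N / \<gamma>))) = (\<gamma> / real N) ^ N"
    using \<gamma>_pos N by (simp add: exp_of_nat_mult)
  also have "\<dots> \<le> (\<gamma> / real N) ^ e"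
    using ratio unfolding N_def e_def by (intro power_decreasing) simp_all
  also have "\<dots> \<le> (real (label_gap t k) * forced_lb t) ^ e"
    using weight ratio by (intro power_mono) auto
  finally show ?thesis unfolding N_def e_def by (simp add: power_mult_distrib)
qed

lemma expectation_M_count_ge_exp:
  assumes "16 \<le> t" "32 * real (tree_size m (Suc k)) \<le> real t"
  shows "real t / 2 * exp (- (real (tree_size m (Suc k))
      * (ln (real (tree_size m (Suc k)) / \<gamma>) + 32 * real m)))
    \<le> measure_pmf.expectation (PA m \<delta> t) (\<lambda>xs. real (M_count m t xs k))"
proof -
  define N where "N = real (tree_size m (Suc k))"
  define x where "x = hit_ub t k"
  define e where "e = m * tree_size m k"
  have x: "0 \<le> x" "x \<le> 16 * N / real t" "16 * N / real t \<le> 1/2"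
    using hit_ub_nonneg hit_ub_le[OF assms(1)] assms unfolding x_def N_def by (auto simp: field_simps)
  have "2 * real (m * t) * x \<le> 2 * real (m * t) * (16 * N / real t)"
    using x by (intro mult_left_mono) auto
  also have "\<dots> = 32 * real m * N" using assms(1) by (simp add: field_simps)
  finally have "2 * real (m * t) * x \<le> 32 * real m * N" .
  then have "exp (- (32 * real m * N)) \<le> exp (- (2 * real (m * t) * x))" by simp
  also have "\<dots> \<le> (1 - x) ^ (m * t)" using exp_le_one_minus_power[of x "m * t"] x by simp
  finally have "exp (- (32 * real m * N)) \<le> (1 - x) ^ (m * t)" .
  moreover have "exp (- (N * ln (N / \<gamma>))) \<le> real (label_gap t k ^ e) * forced_lb t ^ e"
    using labelling_weight_ge[OF assms] unfolding N_def e_def .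
  moreover have "real t / 2 \<le> real (t - t div 2)" by linarith
  ultimately have "real t / 2 * (exp (- (N * ln (N / \<gamma>))) * exp (- (32 * real m * N)))
      \<le> real (t - t div 2) * (real (label_gap t k ^ e) * forced_lb t ^ e * (1 - x) ^ (m * t))"
    using forced_lb_nonneg[of t] by (intro mult_mono) auto
  also have "\<dots> \<le> measure_pmf.expectation (PA m \<delta> t) (\<lambda>xs. real (M_count m t xs k))"
    using expectation_M_count_ge[of t k] assms(1) x unfolding x_def e_def by (simp add: mult.assoc)
  finally show ?thesis unfolding N_def by (simp add: exp_add[symmetric] algebra_simps)
qed

lemma expectation_M_count_ge_ln_powr:
  fixes t :: nat and \<epsilon> :: real
  defines "\<Phi> \<equiv> real m ^ 2 * ln (real t) powr max (1 - \<epsilon>) (1/2)"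
  assumes "0 < \<epsilon>" "16 \<le> t" "32 * \<Phi> \<le> real t"
  shows "real t / 2 * exp (- (\<Phi> * (ln (\<Phi> / \<gamma>) + 32 * real m)))
    \<le> measure_pmf.expectation (PA m \<delta> t)
         (\<lambda>xs. real (M_count m t xs (nat (round ((1 - \<epsilon>) * ln (ln (real t)) / ln (real m))))))"
proof -
  define k where "k = nat (round ((1 - \<epsilon>) * ln (ln (real t)) / ln (real m)))"
  define N where "N = real (tree_size m (Suc k))"
  have "16 \<le> real t" using assms(3) by simp
  then have "exp 1 < real t" using exp_le by linarith
  then have "ln (exp 1) < ln (real t)" using \<open>16 \<le> real t\<close> by (subst ln_less_cancel_iff) auto
  then have "1 < ln (real t)" by simp
  then have "real k \<le> max (1 - \<epsilon>) (1/2) * ln (ln (real t)) / ln (real m) + 1"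
    unfolding k_def using m_ge_2
    by (intro real_nat_round_le divide_right_mono mult_right_mono) auto
  then have "N \<le> \<Phi>" unfolding N_def \<Phi>_def using tree_size_le_ln_powr[OF m_ge_2] \<open>1 < ln (real t)\<close> by simp
  moreover have "1 \<le> N" unfolding N_def by simp
  moreover have "0 \<le> ln (N / \<gamma>)" using \<open>1 \<le> N\<close> \<gamma>_pos \<gamma>_le_1 by (simp add: field_simps)
  moreover have "ln (N / \<gamma>) \<le> ln (\<Phi> / \<gamma>)"
    using \<open>N \<le> \<Phi>\<close> \<open>1 \<le> N\<close> \<gamma>_pos by (simp add: divide_right_mono)
  ultimately have "N * (ln (N / \<gamma>) + 32 * real m) \<le> \<Phi> * (ln (\<Phi> / \<gamma>) + 32 * real m)"
    by (intro mult_mono) auto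
  then have "real t / 2 * exp (- (\<Phi> * (ln (\<Phi> / \<gamma>) + 32 * real m)))
      \<le> real t / 2 * exp (- (N * (ln (N / \<gamma>) + 32 * real m)))"
    by (intro mult_left_mono) auto
  also have "\<dots> \<le> measure_pmf.expectation (PA m \<delta> t) (\<lambda>xs. real (M_count m t xs k))"
    using expectation_M_count_ge_exp[of t k] assms \<open>N \<le> \<Phi>\<close> unfolding N_def by simp
  finally show ?thesis unfolding k_def .
qed

text \<open>The lower bound grows like t exp(-O((log t)^\<eta> log log t)) with \<eta> < 1.\<close>
theorem expectation_M_count_at_top:
  assumes "0 < \<epsilon>"
  shows "filterlim
           (\<lambda>t::nat. measure_pmf.expectation (PA m \<delta> t)
              (\<lambda>xs. real (M_count m t xs
                 (nat (round ((1 - \<epsilon>) * ln (ln (real t)) / ln (real m)))))))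
           at_top sequentially"
proof -
  define \<eta> where "\<eta> = max (1 - \<epsilon>) (1/2)"
  define K where "K = real m ^ 2"
  define b where "b x = x / 2 * exp (- (K * ln x powr \<eta> * (ln (K * ln x powr \<eta> / \<gamma>) + 32 * real m)))"
    for x :: real
  have \<eta>: "0 < \<eta>" "\<eta> < 1" unfolding \<eta>_def using assms by auto
  have K: "0 < K" unfolding K_def using m_pos by simp
  have "filterlim b at_top at_top" unfolding b_def using \<eta> K \<gamma>_pos by real_asymp
  then have lim: "filterlim (\<lambda>t. b (real t)) at_top sequentially"
    by (rule filterlim_compose[OF _ filterlim_real_sequentially])
  have "eventually (\<lambda>x. 32 * (K * ln x powr \<eta>) \<le> x) at_top" using \<eta> K by real_asymp
  moreover have "eventually (\<lambda>x::real. 16 \<le> x) at_top" by real_asymp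
  ultimately have "eventually (\<lambda>x. 32 * (K * ln x powr \<eta>) \<le> x \<and> 16 \<le> x) at_top"
    by (rule eventually_conj)
  then have "eventually (\<lambda>t. 32 * (K * ln (real t) powr \<eta>) \<le> real t \<and> 16 \<le> real t) sequentially"
    by (rule eventually_compose_filterlim[OF _ filterlim_real_sequentially])
  then have "eventually (\<lambda>t. b (real t) \<le> measure_pmf.expectation (PA m \<delta> t)
      (\<lambda>xs. real (M_count m t xs (nat (round ((1 - \<epsilon>) * ln (ln (real t)) / ln (real m))))))) sequentially"
  proof (rule eventually_mono)
    fix t :: nat
    assume "32 * (K * ln (real t) powr \<eta>) \<le> real t \<and> 16 \<le> real t"
    then show "b (real t) \<le> measure_pmf.expectation (PA m \<delta> t)
      (\<lambda>xs. real (M_count m t xs (nat (round ((1 - \<epsilon>) * ln (ln (real t)) / ln (real m))))))"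
      unfolding b_def K_def \<eta>_def by (intro expectation_M_count_ge_ln_powr[OF assms]) auto
  qed
  with lim show ?thesis by (rule filterlim_at_top_mono)
qed

end

theorem proposition4p6:
  fixes m :: nat and \<delta> \<epsilon> :: real
  assumes "m \<ge> 2" and "- real m < \<delta>" and "\<delta> < 0" and "\<epsilon> > 0"
  shows "filterlim
           (\<lambda>t::nat. measure_pmf.expectation (PA m \<delta> t)
              (\<lambda>xs. real (M_count m t xs
                 (nat (round ((1 - \<epsilon>) * ln (ln (real t)) / ln (real m)))))))
           at_top sequentially"
proof -
  interpret pa_model m \<delta> using assms(1-3) by unfold_locales
  show ?thesis using expectation_M_count_at_top[OF assms(4)] .
qed

end
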